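(* (Soundness.) If $t\in\mathtt T_J$ is typable in $\cap J$, i.e. $\Gamma\vdash t:\sigma$ is derivable for some environment $\Gamma$ and type $\sigma$, then $t\in SN_{d\beta}$.
   Context: Terms $\mathtt T_J$: $t,u,r ::= x \mid \lambda x.t \mid t(u,y.r)$ ($y$ bound in $r$), up to $\alpha$-equivalence; $\{u/x\}t$ capture-avoiding substitution. List contexts $\mathtt D ::= \Diamond \mid t(u,y.\mathtt D)$. Distant beta: $\mathtt D\langle\lambda x.t\rangle(u,y.r) \mapsto_{d\beta} \{\{u/x\}\mathtt D\langle t\rangle/y\}r$ (variables bound by $\mathtt D$ not free in $u$, $x$ not in $\mathtt D$), $\to_{d\beta}$ its closure under all contexts; $SN_{d\beta}$ the set of terms with no infinite $\to_{d\beta}$-sequence. System $\cap J$: types $\sigma,\tau ::= \alpha \mid \mathcal M\to\sigma$, $\mathcal M=[\sigma_i]_{i\in I}$ a finite possibly empty multiset; $\sqcup$ multiset union; environments map variables to multisets, $\wedge$ pointwise union, $\Gamma;x:\mathcal M$ extension with $x\notin\mathrm{dom}\,\Gamma$. $\mathrm{ch}(\mathcal M)=\mathcal M$ if $\mathcal M\ne[\,]$, $\mathrm{ch}([\,])=[\tau]$ for an arbitrary $\tau$. Rules: (var) $x:[\sigma]\vdash x:\sigma$; (abs) from $\Gamma;x:\mathcal M\vdash t:\sigma$ infer $\Gamma\vdash\lambda x.t:\mathcal M\to\sigma$; (many) from $(\Gamma_i\vdash t:\sigma_i)_{i\in I}$, $I\ne\emptyset$, infer $\wedge_i\Gamma_i\vdash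 t:[\sigma_i]_{i\in I}$; (app) from $\Gamma\vdash t:\mathrm{ch}([\mathcal M_i\to\tau_i]_{i\in I})$, $\Delta\vdash u:\mathrm{ch}(\sqcup_i\mathcal M_i)$, $\Lambda;y:[\tau_i]_{i\in I}\vdash r:\sigma$ infer $\Gamma\wedge\Delta\wedge\Lambda\vdash t(u,y.r):\sigma$. *)

theory Defs
  imports Main "HOL-Library.Multiset"
begin

(* Var i : variable;  Lam t : \<lambda>x.t ;  App t u r : t(u, y.r) where y is bound (index 0) in r *)
datatype trm = Var nat | Lam trm | App trm trm trm

fun lift :: "nat \<Rightarrow> trm \<Rightarrow> trm" where
  "lift k (Var i) = (if i < k then Var i else Var (Suc i))"
| "lift k (Lam t) = Lam (lift (Suc k) t)"
| "lift k (App t u r) = App (lift k t) (lift k u) (lift (Suc k) r)"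

fun subst :: "trm \<Rightarrow> nat \<Rightarrow> trm \<Rightarrow> trm" where
  "subst (Var i) k s = (if k < i then Var (i - 1) else if i = k then s else Var i)"
| "subst (Lam t) k s = Lam (subst t (Suc k) (lift 0 s))"
| "subst (App t u r) k s = App (subst t k s) (subst u k s) (subst r (Suc k) (lift 0 s))"

datatype lctx = Hole | CApp trm trm lctx

fun plug :: "lctx \<Rightarrow> trm \<Rightarrow> trm" where
  "plug Hole s = s"
| "plug (CApp t u D) s = App t u (plug D s)"

fun depth :: "lctx \<Rightarrow> nat" where
  "depth Hole = 0"
| "depth (CApp t u D) = Suc (depth D)"

(* D<\<lambda>x.t>(u, y.r) \<mapsto> {{u/x} D<t> / y} r ; lifting u past the binders of D
   realises the side condition that variables bound by D are not free in u *)
definition dbeta_root :: "trm \<Rightarrow> trm \<Rightarrow> bool" where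
  "dbeta_root a b \<longleftrightarrow> (\<exists>D t u r. a = App (plug D (Lam t)) u r \<and>
      b = subst r 0 (plug D (subst t 0 ((lift 0 ^^ depth D) u))))"

inductive dbeta :: "trm \<Rightarrow> trm \<Rightarrow> bool" where
  root: "dbeta_root a b \<Longrightarrow> dbeta a b"
| lam: "dbeta t t' \<Longrightarrow> dbeta (Lam t) (Lam t')"
| app1: "dbeta t t' \<Longrightarrow> dbeta (App t u r) (App t' u r)"
| app2: "dbeta u u' \<Longrightarrow> dbeta (App t u r) (App t u' r)"
| app3: "dbeta r r' \<Longrightarrow> dbeta (App t u r) (App t u r')"

definition SN_dbeta :: "trm \<Rightarrow> bool" where
  "SN_dbeta t \<longleftrightarrow> \<not> (\<exists>f. f 0 = t \<and> (\<forall>i. dbeta (f i) (f (Suc i))))"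

datatype ty = TVar nat | Arr "ty multiset" ty

type_synonym env = "nat \<Rightarrow> ty multiset"

definition env_and :: "env \<Rightarrow> env \<Rightarrow> env" where
  "env_and G D = (\<lambda>x. G x + D x)"

definition env_ext :: "env \<Rightarrow> ty multiset \<Rightarrow> env" where
  "env_ext G M = (\<lambda>i. case i of 0 \<Rightarrow> M | Suc j \<Rightarrow> G j)"

definition env_single :: "nat \<Rightarrow> ty \<Rightarrow> env" where
  "env_single x s = (\<lambda>y. if y = x then {#s#} else {#})"

definition env_empty :: env where
  "env_empty = (\<lambda>_. {#})"

(* is_ch M N  iff  N = ch(M), with an arbitrary choice of \<tau> when M is empty *)
definition is_ch :: "ty multiset \<Rightarrow> ty multiset \<Rightarrow> bool" where
  "is_ch M N \<longleftrightarrow> (M \<noteq> {#} \<and> N = M) \<or> (M = {#} \<and> (\<exists>\<tau>. N = {#\<tau>#}))"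

inductive typing :: "env \<Rightarrow> trm \<Rightarrow> ty \<Rightarrow> bool"
  and mtyping :: "env \<Rightarrow> trm \<Rightarrow> ty multiset \<Rightarrow> bool" where
  var: "typing (env_single x s) (Var x) s"
| abs: "typing (env_ext G M) t s \<Longrightarrow> typing G (Lam t) (Arr M s)"
| many: "L \<noteq> [] \<Longrightarrow> (\<forall>p \<in> set L. typing (fst p) t (snd p)) \<Longrightarrow>
         mtyping (foldr env_and (map fst L) env_empty) t (mset (map snd L))"
| app: "is_ch (mset (map (\<lambda>p. Arr (fst p) (snd p)) L)) A \<Longrightarrow> mtyping G t A \<Longrightarrow>
        is_ch (sum_list (map fst L)) B \<Longrightarrow> mtyping D u B \<Longrightarrow>
        typing (env_ext Lm (mset (map snd L))) r s \<Longrightarrow>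
        typing (env_and G (env_and D Lm)) (App t u r) s"

end

theory Submission
  imports Defs
begin

text \<open>
  Annotate typing derivations with their size and read environments as upper bounds on the
  resources a term may use; this relaxation is needed because an argument typed through
  \<open>ch([])\<close> is erased by reduction. Substituting a multi-typing of \<open>u\<close> of size \<open>m\<close>
  for a variable in a derivation of size \<open>n\<close> gives a derivation of size at most \<open>n + m\<close>.
  A distant beta step consumes only the typings of \<open>u\<close> and of \<open>D\<langle>\<lambda>x.t\<rangle>\<close> recorded at
  the application node, and that node disappears. So every step strictly decreases the size
  of some derivation of the reduct, which therefore bounds the length of reduction sequences.
\<close>

definition env_le :: "env \<Rightarrow> env \<Rightarrow> bool" where
  "env_le G H \<longleftrightarrow> (\<forall>x. G x \<subseteq># H x)"

lemma env_le_refl [simp]: "env_le G G"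
  by (simp add: env_le_def)

lemma env_le_trans: "env_le G H \<Longrightarrow> env_le H K \<Longrightarrow> env_le G K"
  unfolding env_le_def by (meson subset_mset.order_trans)

lemma env_le_and_left: "env_le G (env_and G H)"
  by (simp add: env_le_def env_and_def)

lemma env_le_and_right: "env_le H (env_and G H)"
  by (simp add: env_le_def env_and_def)

lemma env_and_mono: "env_le G G' \<Longrightarrow> env_le H H' \<Longrightarrow> env_le (env_and G H) (env_and G' H')"
  by (simp add: env_le_def env_and_def subset_mset.add_mono)

lemma env_and_commute: "env_and G H = env_and H G"
  by (auto simp: env_and_def add.commute)

lemma env_and_assoc: "env_and (env_and G H) K = env_and G (env_and H K)"
  by (auto simp: env_and_def add.assoc)

lemma env_and_left_commute: "env_and G (env_and H K) = env_and H (env_and G K)"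
  by (auto simp: env_and_def add.left_commute)

lemmas env_and_ac = env_and_assoc env_and_commute env_and_left_commute

lemma env_le_and_interchange:
  "env_le (env_and G1 G2) G \<Longrightarrow> env_le (env_and H1 H2) H \<Longrightarrow>
    env_le (env_and (env_and G1 H1) (env_and G2 H2)) (env_and G H)"
  using env_and_mono[of "env_and G1 G2" G "env_and H1 H2" H] by (simp add: env_and_ac)

lemma env_and_ext: "env_and (env_ext G M) (env_ext H N) = env_ext (env_and G H) (M + N)"
  by (auto simp: env_and_def env_ext_def split: nat.split)

lemma env_le_ext: "env_le G H \<Longrightarrow> env_le (env_ext G M) (env_ext H M)"
  by (simp add: env_le_def env_ext_def split: nat.split)

inductive sized_typing :: "env \<Rightarrow> trm \<Rightarrow> ty \<Rightarrow> nat \<Rightarrow> bool"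
  and sized_mtyping :: "env \<Rightarrow> trm \<Rightarrow> ty multiset \<Rightarrow> nat \<Rightarrow> bool" where
  sized_var: "s \<in># G x \<Longrightarrow> sized_typing G (Var x) s 1"
| sized_abs: "sized_typing (env_ext G M) t s n \<Longrightarrow> sized_typing G (Lam t) (Arr M s) (Suc n)"
| sized_app: "is_ch (mset (map (\<lambda>p. Arr (fst p) (snd p)) L)) A \<Longrightarrow> sized_mtyping G1 t A n1 \<Longrightarrow>
    is_ch (sum_list (map fst L)) B \<Longrightarrow> sized_mtyping G2 u B n2 \<Longrightarrow>
    sized_typing (env_ext G3 (mset (map snd L))) r s n3 \<Longrightarrow>
    env_le (env_and G1 (env_and G2 G3)) G \<Longrightarrow>
    sized_typing G (App t u r) s (Suc (n1 + n2 + n3))"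
| sized_nil: "sized_mtyping G t {#} 0"
| sized_cons: "sized_typing G1 t s n \<Longrightarrow> sized_mtyping G2 t A m \<Longrightarrow> env_le (env_and G1 G2) G \<Longrightarrow>
    sized_mtyping G t (add_mset s A) (n + m)"

inductive_cases sized_typing_LamE: "sized_typing G (Lam t) s n"
inductive_cases sized_typing_AppE: "sized_typing G (App t u r) s n"
inductive_cases sized_mtyping_consE: "sized_mtyping G t (add_mset s A) n"

lemma sized_typing_weaken:
  "sized_typing G t s n \<Longrightarrow> env_le G H \<Longrightarrow> sized_typing H t s n"
  "sized_mtyping G t A n \<Longrightarrow> env_le G H \<Longrightarrow> sized_mtyping H t A n"
proof (induction arbitrary: H and H rule: sized_typing_sized_mtyping.inducts)
  case (sized_var s G x)
  then show ?case by (meson env_le_def mset_subset_eqD sized_typing_sized_mtyping.sized_var)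
next
  case (sized_abs G M t s n)
  then show ?case by (meson env_le_ext sized_typing_sized_mtyping.sized_abs)
next
  case (sized_app L A G1 t n1 B G2 u n2 G3 r s n3 G)
  then show ?case
    using sized_typing_sized_mtyping.sized_app[of L A G1 t n1 B G2 u n2 G3 r s n3 H] env_le_trans
    by blast
next
  case (sized_nil G t)
  show ?case by (rule sized_typing_sized_mtyping.sized_nil)
next
  case (sized_cons G1 t s n G2 A m G)
  then show ?case by (meson env_le_trans sized_typing_sized_mtyping.sized_cons)
qed

lemma typing_imp_sized:
  "typing G t s \<Longrightarrow> \<exists>n. sized_typing G t s n"
  "mtyping G t A \<Longrightarrow> \<exists>n. sized_mtyping G t A n"
proof (induction rule: typing_mtyping.inducts)
  case (var x s)
  have "sized_typing (env_single x s) (Var x) s 1"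
    by (rule sized_var) (simp add: env_single_def)
  then show ?case ..
next
  case (abs G M t s)
  then show ?case using sized_abs by blast
next
  case (many L t)
  have "\<exists>n. sized_mtyping (foldr env_and (map fst L) env_empty) t (mset (map snd L)) n"
    if "\<forall>p \<in> set L. \<exists>n. sized_typing (fst p) t (snd p) n" for L
    using that
  proof (induction L)
    case Nil
    then show ?case using sized_nil by auto
  next
    case (Cons p L)
    then show ?case using sized_cons[OF _ _ env_le_refl] by fastforce
  qed
  then show ?case using many.IH by blast
next
  case (app L A G t B D u Lm r s)
  then show ?case using sized_app[OF _ _ _ _ _ env_le_refl] by meson
qed

lemma sized_mtyping_add_msetE:
  assumes "sized_mtyping G t (add_mset s A) n"
  obtains G1 G2 n1 n2 where "sized_typing G1 t s n1" "sized_mtyping G2 t A n2"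
    "env_le (env_and G1 G2) G" "n = n1 + n2"
proof -
  have "\<exists>G1 G2 n1 n2. sized_typing G1 t s n1 \<and> sized_mtyping G2 t A n2 \<and>
    env_le (env_and G1 G2) G \<and> n = n1 + n2"
    using assms
  proof (induction A arbitrary: G s n rule: full_multiset_induct)
    case (less A)
    from less.prems obtain G1 s' n1 G2 A' n2 where
      cons: "add_mset s A = add_mset s' A'" "sized_typing G1 t s' n1" "sized_mtyping G2 t A' n2"
        "env_le (env_and G1 G2) G" "n = n1 + n2"
      by (elim sized_mtyping_consE) blast
    show ?case
    proof (cases "s = s'")
      case True
      then show ?thesis using cons by auto
    next
      case False
      with cons(1) obtain A0 where A': "A' = add_mset s A0" and A: "A = add_mset s' A0"
        by (auto simp: add_eq_conv_ex)
      have "A0 \<subset># A" using A by simp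
      from less.IH[rule_format, OF this cons(3)[unfolded A']] obtain G3 G4 n3 n4 where
        "sized_typing G3 t s n3" "sized_mtyping G4 t A0 n4" "env_le (env_and G3 G4) G2" "n2 = n3 + n4"
        by auto
      moreover have "sized_mtyping (env_and G1 G4) t A (n1 + n4)"
        unfolding A using cons(2) \<open>sized_mtyping G4 t A0 n4\<close> by (rule sized_cons) simp
      moreover have "env_le (env_and G3 (env_and G1 G4)) G"
        using env_le_trans[OF env_and_mono[OF env_le_refl \<open>env_le (env_and G3 G4) G2\<close>] cons(4)]
        by (simp add: env_and_ac)
      moreover have "n = n3 + (n1 + n4)" using cons(5) \<open>n2 = n3 + n4\<close> by simp
      ultimately show ?thesis by blast
    qed
  qed
  then show thesis using that by blast
qed

lemma sized_mtyping_plusE: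
  assumes "sized_mtyping G t (A + B) n"
  obtains G1 G2 n1 n2 where "sized_mtyping G1 t A n1" "sized_mtyping G2 t B n2"
    "env_le (env_and G1 G2) G" "n = n1 + n2"
  using assms
proof (induction A arbitrary: G n thesis)
  case empty
  have "env_and env_empty G = G" by (simp add: env_and_def env_empty_def)
  then show ?case using empty.prems(1)[of env_empty 0 G n] empty.prems(2) sized_nil by simp
next
  case (add a A)
  from add.prems(2)[simplified] obtain G1 G2 n1 n2 where a: "sized_typing G1 t a n1"
    and rest: "sized_mtyping G2 t (A + B) n2" and G: "env_le (env_and G1 G2) G" and n: "n = n1 + n2"
    by (rule sized_mtyping_add_msetE)
  from rest obtain G3 G4 n3 n4 where A: "sized_mtyping G3 t A n3" and B: "sized_mtyping G4 t B n4"
    and G2: "env_le (env_and G3 G4) G2" and n2: "n2 = n3 + n4"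
    by (rule add.IH[rotated])
  have "sized_mtyping (env_and G1 G3) t (add_mset a A) (n1 + n3)"
    using a A by (rule sized_cons) simp
  moreover have "env_le (env_and (env_and G1 G3) G4) G"
    using env_le_trans[OF env_and_mono[OF env_le_refl G2] G] by (simp add: env_and_assoc)
  ultimately show ?case using add.prems(1) B n n2 by simp
qed

lemma sized_mtyping_subsetE:
  assumes "sized_mtyping G t M n" "A + B \<subseteq># M"
  obtains G1 G2 n1 n2 where "sized_mtyping G1 t A n1" "sized_mtyping G2 t B n2"
    "env_le (env_and G1 G2) G" "n1 + n2 \<le> n"
proof -
  from assms obtain GAB GR nAB nR where AB: "sized_mtyping GAB t (A + B) nAB"
    and GAB: "env_le (env_and GAB GR) G" and n: "n = nAB + nR"
    by (metis sized_mtyping_plusE subset_mset.add_diff_inverse)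
  from AB obtain G1 G2 n1 n2 where "sized_mtyping G1 t A n1" "sized_mtyping G2 t B n2"
    "env_le (env_and G1 G2) GAB" "nAB = n1 + n2"
    by (rule sized_mtyping_plusE)
  then show thesis using that env_le_trans[OF _ env_le_trans[OF env_le_and_left GAB]] n by simp
qed

lemma is_ch_nonempty: "is_ch M N \<Longrightarrow> N \<noteq> {#}"
  by (auto simp: is_ch_def)

lemma sized_mtyping_of_ch:
  assumes "is_ch M N" "sized_mtyping G t N n"
  obtains n' where "sized_mtyping G t M n'" "n' \<le> n"
  using assms sized_nil by (auto simp: is_ch_def)

definition env_shift :: "nat \<Rightarrow> env \<Rightarrow> env" where
  "env_shift k G i = (if i < k then G i else if i = k then {#} else G (i - 1))"

lemma env_shift_ext: "env_shift (Suc k) (env_ext G M) = env_ext (env_shift k G) M"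
  by (auto simp: env_shift_def env_ext_def split: nat.split)

lemma env_shift_0: "env_shift 0 G = env_ext G {#}"
  by (auto simp: env_shift_def env_ext_def split: nat.split)

lemma env_shift_and: "env_shift k (env_and G H) = env_and (env_shift k G) (env_shift k H)"
  by (auto simp: env_shift_def env_and_def)

lemma env_le_shift: "env_le G H \<Longrightarrow> env_le (env_shift k G) (env_shift k H)"
  by (simp add: env_le_def env_shift_def)

lemma sized_typing_lift:
  "sized_typing G t s n \<Longrightarrow> sized_typing (env_shift k G) (lift k t) s n"
  "sized_mtyping G t A n \<Longrightarrow> sized_mtyping (env_shift k G) (lift k t) A n"
proof (induction arbitrary: k and k rule: sized_typing_sized_mtyping.inducts)
  case (sized_var s G x)
  then have "s \<in># env_shift k G (if x < k then x else Suc x)"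
    by (simp add: env_shift_def)
  then have "sized_typing (env_shift k G) (Var (if x < k then x else Suc x)) s 1"
    by (rule sized_typing_sized_mtyping.sized_var)
  then show ?case by (cases "x < k") simp_all
next
  case (sized_abs G M t s n)
  then show ?case by (metis env_shift_ext lift.simps(2) sized_typing_sized_mtyping.sized_abs)
next
  case (sized_app L A G1 t n1 B G2 u n2 G3 r s n3 G)
  have "sized_typing (env_ext (env_shift k G3) (mset (map snd L))) (lift (Suc k) r) s n3"
    using sized_app.IH(3) by (simp add: env_shift_ext[symmetric])
  moreover have
    "env_le (env_and (env_shift k G1) (env_and (env_shift k G2) (env_shift k G3))) (env_shift k G)"
    using env_le_shift[OF sized_app.hyps(6)] by (simp add: env_shift_and)
  ultimately show ?case
    using sized_typing_sized_mtyping.sized_app[OF sized_app.hyps(1) sized_app.IH(1)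
        sized_app.hyps(3) sized_app.IH(2)]
    by simp
next
  case (sized_nil G t)
  show ?case by (rule sized_typing_sized_mtyping.sized_nil)
next
  case (sized_cons G1 t s n G2 A m G)
  then show ?case
    by (metis env_le_shift env_shift_and sized_typing_sized_mtyping.sized_cons)
qed

lemma sized_mtyping_lift0: "sized_mtyping G u A n \<Longrightarrow> sized_mtyping (env_ext G {#}) (lift 0 u) A n"
  using sized_typing_lift(2)[of G u A n 0] by (simp add: env_shift_0)

definition env_drop :: "nat \<Rightarrow> env \<Rightarrow> env" where
  "env_drop k G i = G (if i < k then i else Suc i)"

lemma env_drop_ext: "env_drop (Suc k) (env_ext G M) = env_ext (env_drop k G) M"
  by (auto simp: env_drop_def env_ext_def split: nat.split)

lemma env_drop_0_ext: "env_drop 0 (env_ext G M) = G"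
  by (simp add: env_drop_def env_ext_def fun_eq_iff)

lemma env_drop_and: "env_drop k (env_and G H) = env_and (env_drop k G) (env_drop k H)"
  by (auto simp: env_drop_def env_and_def)

lemma env_le_drop: "env_le G H \<Longrightarrow> env_le (env_drop k G) (env_drop k H)"
  by (simp add: env_le_def env_drop_def)

lemma env_le_drop_interchange:
  assumes "env_le (env_and G1 G2) G" "env_le (env_and H1 H2) H"
  shows "env_le (env_and (env_and (env_drop k G1) H1) (env_and (env_drop k G2) H2))
    (env_and (env_drop k G) H)"
proof -
  have "env_le (env_and (env_drop k G1) (env_drop k G2)) (env_drop k G)"
    using env_le_drop[OF assms(1)] by (simp add: env_drop_and)
  from env_le_and_interchange[OF this assms(2)] show ?thesis .
qed

lemma sized_mtyping_split_at:
  assumes "sized_mtyping Gu u (G k) m" "env_le (env_and G1 G2) G"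
  obtains Ga Gb ma mb where "sized_mtyping Ga u (G1 k) ma" "sized_mtyping Gb u (G2 k) mb"
    "env_le (env_and Ga Gb) Gu" "ma + mb \<le> m"
proof (rule sized_mtyping_subsetE[OF assms(1)])
  show "G1 k + G2 k \<subseteq># G k"
    using assms(2) by (simp add: env_le_def env_and_def)
qed

lemma sized_typing_subst_Var:
  assumes "s \<in># G x" "sized_mtyping Gu u (G k) m"
  shows "\<exists>n'. sized_typing (env_and (env_drop k G) Gu) (subst (Var x) k u) s n' \<and> n' \<le> 1 + m"
proof (cases "x = k")
  case True
  with assms(1) obtain R where "G k = add_mset s R"
    by (metis multi_member_split)
  with assms(2) obtain G1 G2 n1 n2 where "sized_typing G1 u s n1" "sized_mtyping G2 u R n2"
    "env_le (env_and G1 G2) Gu" "m = n1 + n2"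
    by (metis sized_mtyping_add_msetE)
  then have "sized_typing (env_and (env_drop k G) Gu) u s n1"
    by (meson env_le_and_left env_le_and_right env_le_trans sized_typing_weaken(1))
  then show ?thesis using True \<open>m = n1 + n2\<close> by auto
next
  case False
  let ?y = "if k < x then x - 1 else x"
  have "s \<in># env_and (env_drop k G) Gu ?y"
    using assms(1) False by (auto simp: env_drop_def env_and_def)
  then have "sized_typing (env_and (env_drop k G) Gu) (Var ?y) s 1"
    by (rule sized_var)
  then show ?thesis using False by auto
qed

lemma sized_typing_subst:
  "sized_typing G t s n \<Longrightarrow> sized_mtyping Gu u (G k) m \<Longrightarrow>
    \<exists>n'. sized_typing (env_and (env_drop k G) Gu) (subst t k u) s n' \<and> n' \<le> n + m"
  "sized_mtyping G t A n \<Longrightarrow> sized_mtyping Gu u (G k) m \<Longrightarrow>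
    \<exists>n'. sized_mtyping (env_and (env_drop k G) Gu) (subst t k u) A n' \<and> n' \<le> n + m"
proof (induction arbitrary: k u Gu m and k u Gu m rule: sized_typing_sized_mtyping.inducts)
  case (sized_var s G x)
  then show ?case by (rule sized_typing_subst_Var)
next
  case (sized_abs G M t s n)
  have "sized_mtyping (env_ext Gu {#}) (lift 0 u) (env_ext G M (Suc k)) m"
    using sized_mtyping_lift0[OF sized_abs.prems] by (simp add: env_ext_def)
  from sized_abs.IH[OF this] obtain n' where
    "sized_typing (env_ext (env_and (env_drop k G) Gu) M) (subst t (Suc k) (lift 0 u)) s n'"
    "n' \<le> n + m"
    by (auto simp: env_drop_ext env_and_ext)
  then show ?case by (auto intro: sized_typing_sized_mtyping.sized_abs)
next
  case (sized_app L A G1 t n1 B G2 u1 n2 G3 r s n3 G)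
  from sized_app.prems sized_app.hyps(6) obtain Ga G23 ma m23 where
    a: "sized_mtyping Ga u (G1 k) ma" and bc: "sized_mtyping G23 u (env_and G2 G3 k) m23"
    and Gu: "env_le (env_and Ga G23) Gu" and m: "ma + m23 \<le> m"
    by (rule sized_mtyping_split_at)
  from bc env_le_refl obtain Gb Gc mb mc where
    b: "sized_mtyping Gb u (G2 k) mb" and c: "sized_mtyping Gc u (G3 k) mc"
    and G23: "env_le (env_and Gb Gc) G23" and m23: "mb + mc \<le> m23"
    by (rule sized_mtyping_split_at)
  from sized_app.IH(1)[OF a] obtain n1' where
    t: "sized_mtyping (env_and (env_drop k G1) Ga) (subst t k u) A n1'" "n1' \<le> n1 + ma"
    by blast
  from sized_app.IH(2)[OF b] obtain n2' where
    u: "sized_mtyping (env_and (env_drop k G2) Gb) (subst u1 k u) B n2'" "n2' \<le> n2 + mb"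
    by blast
  have "sized_mtyping (env_ext Gc {#}) (lift 0 u) (env_ext G3 (mset (map snd L)) (Suc k)) mc"
    using sized_mtyping_lift0[OF c] by (simp add: env_ext_def)
  from sized_app.IH(3)[OF this] obtain n3' where
    r: "sized_typing (env_ext (env_and (env_drop k G3) Gc) (mset (map snd L)))
      (subst r (Suc k) (lift 0 u)) s n3'" "n3' \<le> n3 + mc"
    by (auto simp: env_drop_ext env_and_ext)
  have "env_le (env_and (env_and (env_drop k G1) Ga)
      (env_and (env_and (env_drop k G2) Gb) (env_and (env_drop k G3) Gc))) (env_and (env_drop k G) Gu)"
    using env_le_trans[OF env_and_mono[OF env_le_refl env_le_drop_interchange[OF env_le_refl G23]]
        env_le_drop_interchange[OF sized_app.hyps(6) Gu]] .
  from sized_typing_sized_mtyping.sized_app[OF sized_app.hyps(1) t(1) sized_app.hyps(3) u(1) r(1) this]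
  show ?case using t(2) u(2) r(2) m m23 by (intro exI[of _ "Suc (n1' + n2' + n3')"]) simp
next
  case (sized_nil G t)
  show ?case using sized_typing_sized_mtyping.sized_nil by blast
next
  case (sized_cons G1 t s n G2 A n' G)
  from sized_cons.prems sized_cons.hyps(3) obtain Ga Gb ma mb where
    a: "sized_mtyping Ga u (G1 k) ma" and b: "sized_mtyping Gb u (G2 k) mb"
    and Gu: "env_le (env_and Ga Gb) Gu" and m: "ma + mb \<le> m"
    by (rule sized_mtyping_split_at)
  from sized_cons.IH(1)[OF a] obtain n1 where
    t: "sized_typing (env_and (env_drop k G1) Ga) (subst t k u) s n1" "n1 \<le> n + ma"
    by blast
  from sized_cons.IH(2)[OF b] obtain n2 where
    ts: "sized_mtyping (env_and (env_drop k G2) Gb) (subst t k u) A n2" "n2 \<le> n' + mb"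
    by blast
  from sized_typing_sized_mtyping.sized_cons[OF t(1) ts(1)
      env_le_drop_interchange[OF sized_cons.hyps(3) Gu]]
  show ?case using t(2) ts(2) m by (intro exI[of _ "n1 + n2"]) simp
qed

lemma sized_typing_plug_Lam_subst:
  "sized_typing G (plug D (Lam t)) (Arr M s) n \<Longrightarrow> sized_mtyping Gu u M m \<Longrightarrow>
    \<exists>n'. sized_typing (env_and G Gu) (plug D (subst t 0 ((lift 0 ^^ depth D) u))) s n' \<and> n' \<le> n + m"
proof (induction D arbitrary: G n Gu u m)
  case Hole
  from Hole.prems(1) obtain n0 where t: "sized_typing (env_ext G M) t s n0" and n: "n = Suc n0"
    by (auto elim: sized_typing_LamE)
  have "sized_mtyping Gu u (env_ext G M 0) m"
    using Hole.prems(2) by (simp add: env_ext_def)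
  from sized_typing_subst(1)[OF t this] n show ?case
    by (auto simp: env_drop_0_ext)
next
  case (CApp t1 u1 D)
  from CApp.prems(1) obtain L A G1 n1 B G2 n2 G3 n3 where
    h: "is_ch (mset (map (\<lambda>p. Arr (fst p) (snd p)) L)) A" "sized_mtyping G1 t1 A n1"
    "is_ch (sum_list (map fst L)) B" "sized_mtyping G2 u1 B n2"
    and r: "sized_typing (env_ext G3 (mset (map snd L))) (plug D (Lam t)) (Arr M s) n3"
    and G: "env_le (env_and G1 (env_and G2 G3)) G" and n: "n = Suc (n1 + n2 + n3)"
    by (auto elim: sized_typing_AppE)
  from CApp.IH[OF r sized_mtyping_lift0[OF CApp.prems(2)]] obtain n3' where
    "sized_typing (env_ext (env_and G3 Gu) (mset (map snd L)))
      (plug D (subst t 0 ((lift 0 ^^ Suc (depth D)) u))) s n3'" "n3' \<le> n3 + m"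
    by (auto simp: env_and_ext funpow_Suc_right simp del: funpow.simps)
  moreover have "env_le (env_and G1 (env_and G2 (env_and G3 Gu))) (env_and G Gu)"
    using env_and_mono[OF G env_le_refl] by (simp add: env_and_assoc)
  ultimately show ?case
    using sized_typing_sized_mtyping.sized_app[OF h] n by fastforce
qed

lemma sized_mtyping_plug_Lam_subst:
  "sized_mtyping G1 (plug D (Lam t)) (mset (map (\<lambda>p. Arr (fst p) (snd p)) L)) n1 \<Longrightarrow>
    sized_mtyping G2 u (sum_list (map fst L)) n2 \<Longrightarrow>
    \<exists>n. sized_mtyping (env_and G1 G2) (plug D (subst t 0 ((lift 0 ^^ depth D) u)))
      (mset (map snd L)) n \<and> n \<le> n1 + n2"
proof (induction L arbitrary: G1 G2 n1 n2)
  case Nil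
  show ?case by (intro exI[of _ 0]) (simp add: sized_nil)
next
  case (Cons p L)
  from Cons.prems(1) obtain Ga Gb na nb where
    a: "sized_typing Ga (plug D (Lam t)) (Arr (fst p) (snd p)) na"
    and b: "sized_mtyping Gb (plug D (Lam t)) (mset (map (\<lambda>p. Arr (fst p) (snd p)) L)) nb"
    and G1: "env_le (env_and Ga Gb) G1" and n1: "n1 = na + nb"
    by (auto elim: sized_mtyping_add_msetE)
  from Cons.prems(2) obtain Gc Gd nc nd where
    c: "sized_mtyping Gc u (fst p) nc" and d: "sized_mtyping Gd u (sum_list (map fst L)) nd"
    and G2: "env_le (env_and Gc Gd) G2" and n2: "n2 = nc + nd"
    by (auto elim: sized_mtyping_plusE)
  let ?X = "plug D (subst t 0 ((lift 0 ^^ depth D) u))"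
  from sized_typing_plug_Lam_subst[OF a c] Cons.IH[OF b d] obtain nx ny where
    "sized_typing (env_and Ga Gc) ?X (snd p) nx" "nx \<le> na + nc"
    "sized_mtyping (env_and Gb Gd) ?X (mset (map snd L)) ny" "ny \<le> nb + nd"
    by blast
  moreover have "env_le (env_and (env_and Ga Gc) (env_and Gb Gd)) (env_and G1 G2)"
    by (rule env_le_and_interchange[OF G1 G2])
  ultimately show ?case
    using sized_typing_sized_mtyping.sized_cons n1 n2 by fastforce
qed

lemma sized_typing_dbeta_root:
  assumes "dbeta_root a b" "sized_typing G a s n"
  shows "\<exists>n'. sized_typing G b s n' \<and> n' < n"
proof -
  from assms(1) obtain D t u r where a: "a = App (plug D (Lam t)) u r"
    and b: "b = subst r 0 (plug D (subst t 0 ((lift 0 ^^ depth D) u)))"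
    unfolding dbeta_root_def by blast
  from assms(2) obtain L A G1 n1 B G2 n2 G3 n3 where
    chA: "is_ch (mset (map (\<lambda>p. Arr (fst p) (snd p)) L)) A"
    and tA: "sized_mtyping G1 (plug D (Lam t)) A n1"
    and chB: "is_ch (sum_list (map fst L)) B" and uB: "sized_mtyping G2 u B n2"
    and r: "sized_typing (env_ext G3 (mset (map snd L))) r s n3"
    and G: "env_le (env_and G1 (env_and G2 G3)) G" and n: "n = Suc (n1 + n2 + n3)"
    unfolding a by (auto elim: sized_typing_AppE)
  obtain n1' where "n1' \<le> n1"
    and t: "sized_mtyping G1 (plug D (Lam t)) (mset (map (\<lambda>p. Arr (fst p) (snd p)) L)) n1'"
    by (rule sized_mtyping_of_ch[OF chA tA])
  obtain n2' where u: "sized_mtyping G2 u (sum_list (map fst L)) n2'" and "n2' \<le> n2"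
    by (rule sized_mtyping_of_ch[OF chB uB])
  let ?X = "plug D (subst t 0 ((lift 0 ^^ depth D) u))"
  from sized_mtyping_plug_Lam_subst[OF t u] obtain nx where "nx \<le> n1' + n2'"
    and "sized_mtyping (env_and G1 G2) ?X (env_ext G3 (mset (map snd L)) 0) nx"
    by (auto simp: env_ext_def)
  from sized_typing_subst(1)[OF r this(2)] obtain n' where
    "sized_typing (env_and G3 (env_and G1 G2)) b s n'" "n' \<le> n3 + nx"
    unfolding b by (auto simp: env_drop_0_ext)
  moreover have "env_le (env_and G3 (env_and G1 G2)) G"
    using G by (simp add: env_and_ac)
  ultimately show ?thesis
    using n \<open>nx \<le> n1' + n2'\<close> \<open>n1' \<le> n1\<close> \<open>n2' \<le> n2\<close>
    by (auto intro: sized_typing_weaken(1))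
qed

lemma sized_mtyping_decrease:
  assumes step: "\<And>G s n. sized_typing G a s n \<Longrightarrow> \<exists>n'. sized_typing G b s n' \<and> n' < n"
  shows "sized_mtyping G a A n \<Longrightarrow> A \<noteq> {#} \<Longrightarrow> \<exists>n'. sized_mtyping G b A n' \<and> n' < n"
proof (induction A arbitrary: G n)
  case empty
  then show ?case by simp
next
  case (add s A)
  from add.prems(1) obtain G1 G2 n1 n2 where hd: "sized_typing G1 a s n1"
    and tl: "sized_mtyping G2 a A n2" and G: "env_le (env_and G1 G2) G" and n: "n = n1 + n2"
    by (rule sized_mtyping_add_msetE)
  from step[OF hd] obtain n1' where "sized_typing G1 b s n1'" "n1' < n1"
    by blast
  moreover obtain n2' where "sized_mtyping G2 b A n2'" "n2' \<le> n2"
  proof (cases "A = {#}")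
    case True
    then show thesis using that[of 0] sized_nil by simp
  next
    case False
    then show thesis using add.IH[OF tl] that by (auto dest: less_imp_le)
  qed
  ultimately show ?case
    using sized_typing_sized_mtyping.sized_cons[OF _ _ G] n by fastforce
qed

lemma sized_typing_dbeta:
  "dbeta a b \<Longrightarrow> sized_typing G a s n \<Longrightarrow> \<exists>n'. sized_typing G b s n' \<and> n' < n"
proof (induction arbitrary: G s n rule: dbeta.induct)
  case (root a b)
  then show ?case by (rule sized_typing_dbeta_root)
next
  case (lam t t')
  from lam.prems obtain M s' n0 where "s = Arr M s'" "n = Suc n0"
    and t: "sized_typing (env_ext G M) t s' n0"
    by (auto elim: sized_typing_LamE)
  with lam.IH[OF t] show ?case
    by (auto intro: sized_typing_sized_mtyping.sized_abs)
next
  case (app1 t t' u r)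
  from app1.prems obtain L A G1 n1 B G2 n2 G3 n3 where
    h: "is_ch (mset (map (\<lambda>p. Arr (fst p) (snd p)) L)) A" "sized_mtyping G1 t A n1"
    "is_ch (sum_list (map fst L)) B" "sized_mtyping G2 u B n2"
    "sized_typing (env_ext G3 (mset (map snd L))) r s n3"
    "env_le (env_and G1 (env_and G2 G3)) G" and n: "n = Suc (n1 + n2 + n3)"
    by (auto elim: sized_typing_AppE)
  from sized_mtyping_decrease[OF app1.IH h(2) is_ch_nonempty[OF h(1)]] obtain n1' where
    "sized_mtyping G1 t' A n1'" "n1' < n1"
    by blast
  with sized_typing_sized_mtyping.sized_app[OF h(1) _ h(3-6)] n show ?case
    by fastforce
next
  case (app2 u u' t r)
  from app2.prems obtain L A G1 n1 B G2 n2 G3 n3 where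
    h: "is_ch (mset (map (\<lambda>p. Arr (fst p) (snd p)) L)) A" "sized_mtyping G1 t A n1"
    "is_ch (sum_list (map fst L)) B" "sized_mtyping G2 u B n2"
    "sized_typing (env_ext G3 (mset (map snd L))) r s n3"
    "env_le (env_and G1 (env_and G2 G3)) G" and n: "n = Suc (n1 + n2 + n3)"
    by (auto elim: sized_typing_AppE)
  from sized_mtyping_decrease[OF app2.IH h(4) is_ch_nonempty[OF h(3)]] obtain n2' where
    "sized_mtyping G2 u' B n2'" "n2' < n2"
    by blast
  with sized_typing_sized_mtyping.sized_app[OF h(1-3) _ h(5-6)] n show ?case
    by fastforce
next
  case (app3 r r' t u)
  from app3.prems obtain L A G1 n1 B G2 n2 G3 n3 where
    h: "is_ch (mset (map (\<lambda>p. Arr (fst p) (snd p)) L)) A" "sized_mtyping G1 t A n1"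
    "is_ch (sum_list (map fst L)) B" "sized_mtyping G2 u B n2"
    "sized_typing (env_ext G3 (mset (map snd L))) r s n3"
    "env_le (env_and G1 (env_and G2 G3)) G" and n: "n = Suc (n1 + n2 + n3)"
    by (auto elim: sized_typing_AppE)
  from app3.IH[OF h(5)] obtain n3' where
    "sized_typing (env_ext G3 (mset (map snd L))) r' s n3'" "n3' < n3"
    by blast
  with sized_typing_sized_mtyping.sized_app[OF h(1-4) _ h(6)] n show ?case
    by fastforce
qed

lemma SN_dbetaI:
  assumes "\<And>t'. dbeta t t' \<Longrightarrow> SN_dbeta t'"
  shows "SN_dbeta t"
  unfolding SN_dbeta_def
proof
  assume "\<exists>f. f 0 = t \<and> (\<forall>i. dbeta (f i) (f (Suc i)))"
  then obtain f where "f 0 = t" and f: "\<forall>i. dbeta (f i) (f (Suc i))"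
    by blast
  then have "dbeta t (f (Suc 0))"
    by metis
  moreover have "\<exists>g. g 0 = f (Suc 0) \<and> (\<forall>i. dbeta (g i) (g (Suc i)))"
    using f by (intro exI[of _ "\<lambda>i. f (Suc i)"]) simp
  then have "\<not> SN_dbeta (f (Suc 0))"
    unfolding SN_dbeta_def by blast
  ultimately show False
    using assms by blast
qed

lemma sized_typing_SN: "sized_typing G t s n \<Longrightarrow> SN_dbeta t"
proof (induction n arbitrary: t rule: less_induct)
  case (less n)
  show ?case
  proof (rule SN_dbetaI)
    fix t' assume "dbeta t t'"
    with less.prems obtain n' where "sized_typing G t' s n'" "n' < n"
      using sized_typing_dbeta by blast
    then show "SN_dbeta t'" by (rule less.IH[rotated])
  qed
qed

theorem mainTheorem10:
  assumes "typing G t s"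
  shows "SN_dbeta t"
proof -
  from typing_imp_sized(1)[OF assms] obtain n where "sized_typing G t s n" ..
  then show ?thesis by (rule sized_typing_SN)
qed

end
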